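(* Let $q$ be a prime. For integers $a,b,m,\lambda$ with $\gcd(am\lambda,q)=1$ and a real number $N\geqslant 1$, define \[ U_{a,b,\lambda}(m,N)=\sum_{n\leqslant N}\ \sum_{\substack{x\in\{0,1,\ldots,q-1\}\\ x^2\equiv amn+b \bmod q}} \exp(2\pi i \lambda x/q), \] where $n$ runs over positive integers $n\leqslant N$. Then \[ U_{a,b,\lambda}(m,N)\ll q^{1/2}\log q, \] uniformly over all real $N\geqslant 1$ and all integers $a,b,m,\lambda$ with $\gcd(am\lambda,q)=1$.
   Context: $q$ is a (large) prime number and $\mathbb{F}_q$ is represented by $\{0,1,\ldots,q-1\}$. The notation $X\ll Y$ means $|X|\leqslant cY$ for an absolute constant $c>0$. *)

theory Defs
  imports "HOL-Analysis.Analysis" "HOL-Number_Theory.Cong"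
begin

definition U_sum :: "int \<Rightarrow> int \<Rightarrow> int \<Rightarrow> int \<Rightarrow> int \<Rightarrow> real \<Rightarrow> complex" where
  "U_sum q a b l m N =
     (\<Sum>n\<in>{1..\<lfloor>N\<rfloor>}. \<Sum>x\<in>{x\<in>{0..q-1}. [x^2 = a*m*n + b] (mod q)}.
        exp (2 * pi * \<i> * of_int (l * x) / of_int q))"

end

theory Submission
  imports Defs "HOL-Number_Theory.Modular_Inverse"
begin

(* Detect the congruence x^2 = a m n + b (mod q) with additive characters e(k/q). This gives
   U = q^-1 * sum_h e(-h b/q) G(h) S(h), where G(h) = sum_x e((h x^2 + lambda x)/q) is a
   quadratic Gauss sum and S(h) = sum_{n <= N} e(-h a m n/q) a geometric progression.
   G(0) = 0 because q does not divide lambda; for h <> 0, squaring out gives |G(h)| <= sqrt(2q),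
   and |S(h)| <= 2/|1 - e(r/q)| with r = -h a m mod q. As h runs over the nonzero residues so
   does r, and sum_{0<r<q} 1/|1 - e(r/q)| <= q (1 + log q) by comparison with the harmonic sum. *)

section \<open>Additive characters\<close>

definition add_char :: "int \<Rightarrow> int \<Rightarrow> complex" where
  "add_char q k = exp (2 * pi * \<i> * of_int k / of_int q)"

lemma add_char_add: "add_char q (a + b) = add_char q a * add_char q b"
  unfolding add_char_def by (simp add: exp_add[symmetric] add_divide_distrib distrib_left)

lemma add_char_modulus_mult:
  assumes "q \<noteq> 0"
  shows "add_char q (q * j) = 1"
proof -
  have "2 * pi * \<i> * of_int (q * j) / of_int q = complex_of_real (2 * of_int j * pi) * \<i>"
    using assms by (simp add: field_simps)
  then show ?thesis
    unfolding add_char_def by (metis exp_integer_2pi Ints_of_int)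
qed

lemma add_char_cong:
  assumes "q \<noteq> 0" "[a = b] (mod q)"
  shows "add_char q a = add_char q b"
proof -
  obtain j where "a - b = q * j"
    using assms(2) by (auto simp: cong_iff_dvd_diff elim: dvdE)
  then have "a = b + q * j"
    by simp
  then show ?thesis
    by (simp add: add_char_add add_char_modulus_mult[OF assms(1)])
qed

lemma add_char_mod: "q \<noteq> 0 \<Longrightarrow> add_char q (k mod q) = add_char q k"
  by (rule add_char_cong) (simp_all add: cong_def)

lemma norm_add_char [simp]: "norm (add_char q k) = 1"
  unfolding add_char_def by (simp add: norm_exp_eq_Re)

lemma cnj_add_char: "cnj (add_char q k) = add_char q (- k)"
  unfolding add_char_def by (simp add: exp_cnj)

lemma add_char_eq_1_iff:
  assumes "q > 0"
  shows "add_char q k = 1 \<longleftrightarrow> q dvd k"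
proof
  assume "add_char q k = 1"
  then obtain n :: int where "Im (2 * pi * \<i> * of_int k / of_int q) = of_int (2 * n) * pi"
    unfolding add_char_def exp_eq_1 by blast
  then have "real_of_int k = real_of_int (q * n)"
    using assms by (simp add: field_simps)
  then have "k = q * n" by (simp only: of_int_eq_iff)
  then show "q dvd k" by simp
qed (use assms add_char_modulus_mult in \<open>auto elim!: dvdE\<close>)

lemma add_char_0 [simp]: "add_char q 0 = 1"
  by (simp add: add_char_def)

lemma add_char_of_nat_mult: "add_char q (int i * k) = add_char q k ^ i"
  by (induction i) (simp_all add: distrib_right add_char_add)

lemma sum_add_char_residues:
  assumes "q > 0"
  shows "(\<Sum>h\<in>{0..<q}. add_char q (h * k)) = (if q dvd k then of_int q else 0)"
proof -
  have "(\<Sum>h\<in>{0..<q}. add_char q (h * k)) = (\<Sum>i<nat q. add_char q k ^ i)"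
    using assms by (simp add: image_atLeastZeroLessThan_int sum.reindex add_char_of_nat_mult)
  also have "\<dots> = (if q dvd k then of_int q else 0)"
  proof (cases "q dvd k")
    case True
    then have "add_char q k = 1" using assms add_char_eq_1_iff by blast
    then show ?thesis using True assms by simp
  next
    case False
    have "add_char q k ^ nat q = 1"
      using assms add_char_of_nat_mult[of q "nat q" k] add_char_modulus_mult[of q k] by simp
    then show ?thesis
      using False assms by (simp add: geometric_sum add_char_eq_1_iff)
  qed
  finally show ?thesis .
qed

section \<open>Linear exponential sums\<close>

lemma norm_sum_power_Suc_le:
  fixes z :: "'a :: real_normed_field"
  assumes "z \<noteq> 1" "norm z = 1"
  shows "norm (\<Sum>i<M. z ^ Suc i) \<le> 2 / norm (1 - z)"
proof -
  have "(\<Sum>i<M. z ^ Suc i) = z * ((z ^ M - 1) / (z - 1))"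
    using assms(1) by (simp add: sum_distrib_left geometric_sum[symmetric])
  then have "norm (\<Sum>i<M. z ^ Suc i) = norm (z ^ M - 1) / norm (1 - z)"
    using assms by (simp add: norm_mult norm_divide norm_minus_commute)
  also have "norm (z ^ M - 1) \<le> 2"
    using norm_triangle_ineq4[of "z ^ M" 1] assms(2) by (simp add: norm_power)
  finally show ?thesis
    by (simp add: divide_right_mono)
qed

definition lin_exp_sum :: "int \<Rightarrow> int \<Rightarrow> int \<Rightarrow> complex" where
  "lin_exp_sum q k M = (\<Sum>n\<in>{1..M}. add_char q (n * k))"

lemma norm_lin_exp_sum_le:
  assumes "q > 0" "\<not> q dvd k"
  shows "norm (lin_exp_sum q k M) \<le> 2 / norm (1 - add_char q k)"
proof -
  have "{1..M} = (\<lambda>i. int (Suc i)) ` {..<nat M}"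
  proof (intro set_eqI iffI)
    fix n assume "n \<in> {1..M}"
    then have "n = int (Suc (nat (n - 1)))" "nat (n - 1) \<in> {..<nat M}" by auto
    then show "n \<in> (\<lambda>i. int (Suc i)) ` {..<nat M}" by blast
  qed auto
  then have "lin_exp_sum q k M = (\<Sum>i<nat M. add_char q k ^ Suc i)"
    unfolding lin_exp_sum_def
    by (simp add: sum.reindex inj_on_def add_char_of_nat_mult del: of_nat_Suc power_Suc)
  also have "norm \<dots> \<le> 2 / norm (1 - add_char q k)"
    using assms by (intro norm_sum_power_Suc_le) (simp_all add: add_char_eq_1_iff)
  finally show ?thesis .
qed

lemma sin_ge_third:
  fixes x :: real
  assumes "0 \<le> x" "x \<le> 2"
  shows "x / 3 \<le> sin x"
proof -
  have "\<bar>sin x - (\<Sum>m<3. sin_coeff m * x ^ m)\<bar> \<le> inverse (fact 3) * \<bar>x\<bar> ^ 3"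
    by (rule Maclaurin_sin_bound)
  moreover have "(\<Sum>m<3. sin_coeff m * x ^ m) = x"
    by (simp add: sin_coeff_def eval_nat_numeral)
  ultimately have "\<bar>sin x - x\<bar> \<le> inverse (fact 3) * \<bar>x\<bar> ^ 3"
    by simp
  also have "\<dots> = x ^ 3 / 6"
    using assms by (simp add: eval_nat_numeral)
  finally have "x - x ^ 3 / 6 \<le> sin x"
    by (simp only: abs_le_iff) linarith
  moreover have "x ^ 3 \<le> 4 * x"
    using assms mult_mono[of x 2 x 2] mult_left_mono[of "x * x" 4 x]
    by (simp add: power3_eq_cube mult.commute)
  ultimately show ?thesis by linarith
qed

lemma norm_one_minus_add_char_ge:
  assumes "0 < r" "2 * r \<le> q"
  shows "2 * r / q \<le> norm (1 - add_char q r)"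
proof -
  define x where "x = pi * r / q"
  have "norm (1 - add_char q r) = norm (exp (\<i> * of_real (2 * x)) - 1)"
    unfolding add_char_def x_def by (simp add: norm_minus_commute mult_ac)
  also have "\<dots> = 2 * \<bar>sin x\<bar>"
    using dist_exp_i_1[of "2 * x"] by simp
  finally have norm_eq: "norm (1 - add_char q r) = 2 * \<bar>sin x\<bar>" .
  have "0 \<le> x" "x \<le> pi / 2"
    using assms by (simp_all add: x_def field_simps)
  then have "x / 3 \<le> \<bar>sin x\<bar>"
    using sin_ge_third[of x] pi_less_4 by linarith
  moreover have "r / q \<le> x / 3"
    using assms pi_gt3 by (simp add: x_def field_simps)
  ultimately show ?thesis
    using norm_eq by linarith
qed

lemma inverse_norm_one_minus_add_char_le:
  assumes "0 < r" "r < q"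
  shows "1 / norm (1 - add_char q r) \<le> q / (2 * r) + q / (2 * (q - r))"
proof -
  have "add_char q (q - r) = cnj (add_char q r)"
    using assms by (simp add: cnj_add_char add_char_cong cong_iff_dvd_diff)
  then have symm: "norm (1 - add_char q (q - r)) = norm (1 - add_char q r)"
    by (metis complex_cnj_diff complex_cnj_one complex_mod_cnj)
  have inverse_le: "1 / norm (1 - add_char q r) \<le> real_of_int q / (2 * real_of_int s)"
    if "0 < s" "2 * s \<le> q" "norm (1 - add_char q s) = norm (1 - add_char q r)" for s :: int
  proof -
    have "inverse (norm (1 - add_char q s)) \<le> inverse (2 * s / q)"
      using that norm_one_minus_add_char_ge[of s q] by (intro le_imp_inverse_le) simp_all
    then show ?thesis
      by (simp add: that(3) inverse_eq_divide)
  qed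
  have nonneg: "0 \<le> real_of_int q / (2 * real_of_int r)"
    "0 \<le> real_of_int q / (2 * (real_of_int q - real_of_int r))"
    using assms by simp_all
  show ?thesis
  proof (cases "2 * r \<le> q")
    case True
    then show ?thesis
      using inverse_le[OF assms(1) True refl] nonneg by linarith
  next
    case False
    then have "0 < q - r" "2 * (q - r) \<le> q"
      using assms by simp_all
    then have "1 / norm (1 - add_char q r) \<le> real_of_int q / (2 * (real_of_int q - real_of_int r))"
      using inverse_le[of "q - r"] symm by simp
    then show ?thesis
      using nonneg by linarith
  qed
qed

lemma harm_le_one_plus_ln: "harm n \<le> 1 + ln (real n)"
  using euler_mascheroni_sequence_decreasing[of 1 n] by (cases "n = 0") (simp_all add: harm_def)

lemma sum_inverse_norm_one_minus_add_char_le: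
  assumes "q > 0"
  shows "(\<Sum>r\<in>{1..<q}. 1 / norm (1 - add_char q r)) \<le> q * (1 + ln q)"
proof -
  have reflect: "(\<Sum>r\<in>{1..<q}. q / (2 * (q - r))) = (\<Sum>r\<in>{1..<q}. q / (2 * r))"
    by (rule sum.reindex_bij_witness[of _ "\<lambda>r. q - r" "\<lambda>r. q - r"]) auto
  have harm_eq: "(\<Sum>r\<in>{1..<q}. 1 / real_of_int r) = harm (nat (q - 1))"
  proof -
    have "{1..<q} = int ` {1..nat (q - 1)}"
      using assms by (auto simp: image_int_atLeastAtMost)
    then show ?thesis
      by (simp add: harm_def sum.reindex inverse_eq_divide)
  qed
  have "(\<Sum>r\<in>{1..<q}. 1 / norm (1 - add_char q r))
      \<le> (\<Sum>r\<in>{1..<q}. q / (2 * r) + q / (2 * (q - r)))"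
    using inverse_norm_one_minus_add_char_le by (intro sum_mono) simp
  also have "\<dots> = q * (\<Sum>r\<in>{1..<q}. 1 / real_of_int r)"
    by (simp only: sum.distrib reflect) (simp add: sum_distrib_left)
  also have "\<dots> \<le> q * (1 + ln (q - 1))"
    using assms harm_le_one_plus_ln[of "nat (q - 1)"] by (simp add: harm_eq)
  also have "\<dots> \<le> q * (1 + ln q)"
    using assms by (cases "q = 1") simp_all
  finally show ?thesis .
qed

section \<open>Quadratic Gauss sums\<close>

definition quad_gauss_sum :: "int \<Rightarrow> int \<Rightarrow> int \<Rightarrow> complex" where
  "quad_gauss_sum q h l = (\<Sum>x\<in>{0..<q}. add_char q (h * x\<^sup>2 + l * x))"

lemma sum_residues_shift:
  fixes f :: "int \<Rightarrow> 'a::comm_monoid_add"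
  assumes "q > 0" and periodic: "\<And>x. f (x mod q) = f x"
  shows "(\<Sum>t\<in>{0..<q}. f (y + t)) = (\<Sum>x\<in>{0..<q}. f x)"
proof (rule sum.reindex_bij_witness[of _ "\<lambda>x. (x - y) mod q" "\<lambda>t. (y + t) mod q"])
  fix t assume "t \<in> {0..<q}"
  then show "((y + t) mod q - y) mod q = t"
    by (simp add: mod_diff_left_eq)
  show "(y + t) mod q \<in> {0..<q}" "f ((y + t) mod q) = f (y + t)"
    using assms by simp_all
next
  fix x assume "x \<in> {0..<q}"
  then show "(y + (x - y) mod q) mod q = x" "(x - y) mod q \<in> {0..<q}"
    using assms by (simp_all add: mod_add_right_eq)
qed

lemma quad_gauss_sum_mult_cnj:
  assumes "q > 0"
  shows "quad_gauss_sum q h l * cnj (quad_gauss_sum q h l)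
    = of_int q * (\<Sum>t | t \<in> {0..<q} \<and> q dvd 2 * h * t. add_char q (h * t\<^sup>2 + l * t))"
proof -
  define F where "F x = h * x\<^sup>2 + l * x" for x
  define X where "X = {0..<q}"
  have periodic: "add_char q (F (x mod q) - F y) = add_char q (F x - F y)" for x y
  proof -
    have "[x mod q = x] (mod q)"
      by (simp add: cong_def)
    then have "[F (x mod q) - F y = F x - F y] (mod q)"
      unfolding F_def by (intro cong_diff cong_add cong_mult cong_pow cong_refl)
    then show ?thesis
      using assms by (simp add: add_char_cong)
  qed
  have expand: "F (y + t) - F y = F t + y * (2 * h * t)" for y t
    unfolding F_def by (simp add: algebra_simps power2_eq_square)
  have "quad_gauss_sum q h l = (\<Sum>x\<in>X. add_char q (F x))"
    by (simp add: quad_gauss_sum_def X_def F_def)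
  then have "quad_gauss_sum q h l * cnj (quad_gauss_sum q h l)
      = (\<Sum>x\<in>X. \<Sum>y\<in>X. add_char q (F x - F y))"
    by (simp add: cnj_sum cnj_add_char sum_product add_char_add[symmetric])
  also have "\<dots> = (\<Sum>y\<in>X. \<Sum>x\<in>X. add_char q (F x - F y))"
    by (rule sum.swap)
  also have "\<dots> = (\<Sum>y\<in>X. \<Sum>t\<in>X. add_char q (F (y + t) - F y))"
    unfolding X_def
    by (intro sum.cong refl sum_residues_shift[where f = "\<lambda>x. add_char q (F x - F _)",
          OF assms periodic, symmetric])
  also have "\<dots> = (\<Sum>y\<in>X. \<Sum>t\<in>X. add_char q (F t) * add_char q (y * (2 * h * t)))"
    by (simp only: expand add_char_add)
  also have "\<dots> = (\<Sum>t\<in>X. add_char q (F t) * (\<Sum>y\<in>X. add_char q (y * (2 * h * t))))"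
    by (subst sum.swap) (simp only: sum_distrib_left)
  also have "\<dots> = (\<Sum>t\<in>X. if q dvd 2 * h * t then of_int q * add_char q (F t) else 0)"
    unfolding X_def by (intro sum.cong refl) (simp add: sum_add_char_residues[OF assms] mult.commute)
  also have "\<dots> = of_int q * (\<Sum>t | t \<in> X \<and> q dvd 2 * h * t. add_char q (F t))"
    by (subst sum.inter_filter) (auto simp: X_def sum_distrib_left intro!: sum.cong)
  finally show ?thesis
    by (simp add: X_def F_def)
qed

lemma card_residues_dvd_double_le: "card {t \<in> {0..<q}. q dvd 2 * t} \<le> (2::nat)"
  for q :: int
proof -
  have "{t \<in> {0..<q}. q dvd 2 * t} \<subseteq> {0, q div 2}"
  proof
    fix t assume "t \<in> {t \<in> {0..<q}. q dvd 2 * t}"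
    then have t: "0 \<le> t" "t < q" "q dvd 2 * t"
      by simp_all
    then obtain j where j: "2 * t = q * j" by (auto elim: dvdE)
    have q: "q > 0"
      using t by simp
    have "0 \<le> q * j" "q * j < q * 2"
      using t j by linarith+
    then have "0 \<le> j" "j < 2"
      using q by (simp_all add: zero_le_mult_iff)
    then have "j = 0 \<or> j = 1" by auto
    then show "t \<in> {0, q div 2}"
      using j by auto
  qed
  then have "card {t \<in> {0..<q}. q dvd 2 * t} \<le> card {0, q div 2}"
    by (rule card_mono[rotated]) simp
  also have "\<dots> \<le> 2"
    by (simp add: card_insert_if)
  finally show ?thesis .
qed

lemma norm_quad_gauss_sum_le:
  assumes "q > 0" "coprime h q"
  shows "norm (quad_gauss_sum q h l) \<le> sqrt (2 * q)"
proof -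
  have "coprime q h"
    using assms(2) by (simp add: coprime_commute)
  then have "q dvd 2 * h * t \<longleftrightarrow> q dvd 2 * t" for t
    by (metis coprime_dvd_mult_right_iff mult.assoc mult.left_commute)
  then have dvd_iff: "{t \<in> {0..<q}. q dvd 2 * h * t} = {t \<in> {0..<q}. q dvd 2 * t}"
    by simp
  have "norm (quad_gauss_sum q h l) ^ 2 = norm (quad_gauss_sum q h l * cnj (quad_gauss_sum q h l))"
    by (simp add: norm_mult power2_eq_square)
  also have "\<dots> = q * norm (\<Sum>t | t \<in> {0..<q} \<and> q dvd 2 * t. add_char q (h * t\<^sup>2 + l * t))"
    using quad_gauss_sum_mult_cnj[OF assms(1), of h l] assms(1) dvd_iff
    by (simp add: norm_mult)
  also have "\<dots> \<le> q * card {t \<in> {0..<q}. q dvd 2 * t}"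
    using assms(1) norm_sum[of "\<lambda>t. add_char q (h * t\<^sup>2 + l * t)"] by simp
  also have "\<dots> \<le> 2 * q"
    using assms(1) card_residues_dvd_double_le[of q] by simp
  finally show ?thesis
    by (rule real_le_rsqrt)
qed

section \<open>The sum U\<close>

lemma sum_swap_innermost:
  "(\<Sum>n\<in>A. \<Sum>x\<in>B. \<Sum>h\<in>C. g n x h) = (\<Sum>h\<in>C. \<Sum>n\<in>A. \<Sum>x\<in>B. g n x h)"
proof -
  have "(\<Sum>n\<in>A. \<Sum>x\<in>B. \<Sum>h\<in>C. g n x h) = (\<Sum>n\<in>A. \<Sum>h\<in>C. \<Sum>x\<in>B. g n x h)"
    by (rule sum.cong[OF refl sum.swap])
  also have "\<dots> = (\<Sum>h\<in>C. \<Sum>n\<in>A. \<Sum>x\<in>B. g n x h)"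
    by (rule sum.swap)
  finally show ?thesis .
qed

lemma U_sum_eq_gauss_lin_sums:
  assumes "q > 0"
  shows "U_sum q a b l m N = (\<Sum>h\<in>{0..<q}. add_char q (- (h * b)) * quad_gauss_sum q h l
            * lin_exp_sum q (- (h * a * m)) \<lfloor>N\<rfloor>) / of_int q"
proof -
  define X where "X = {0..<q}"
  define M where "M = \<lfloor>N\<rfloor>"
  define K where "K n x = x\<^sup>2 - (a * m * n + b)" for n x
  have "{0..q - 1} = X"
    by (auto simp: X_def)
  then have "U_sum q a b l m N
      = (\<Sum>n\<in>{1..M}. \<Sum>x\<in>{x \<in> X. [x\<^sup>2 = a * m * n + b] (mod q)}. add_char q (l * x))"
    unfolding U_sum_def add_char_def M_def by simp
  also have "\<dots> = (\<Sum>n\<in>{1..M}. \<Sum>x\<in>X. if q dvd K n x then add_char q (l * x) else 0)"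
    by (rule sum.cong[OF refl], subst sum.inter_filter) (simp_all add: X_def K_def cong_iff_dvd_diff)
  also have "\<dots> = (\<Sum>n\<in>{1..M}. \<Sum>x\<in>X. \<Sum>h\<in>X. add_char q (l * x) * add_char q (h * K n x)) / q"
  proof -
    have "(if q dvd k then z else 0) = (\<Sum>h\<in>X. z * add_char q (h * k)) / q" for k z
      using assms by (simp add: X_def sum_add_char_residues flip: sum_distrib_left)
    then show ?thesis
      by (simp add: sum_divide_distrib)
  qed
  also have "\<dots> = (\<Sum>n\<in>{1..M}. \<Sum>x\<in>X. \<Sum>h\<in>X. add_char q (- (h * b))
      * (add_char q (n * - (h * a * m)) * add_char q (h * x\<^sup>2 + l * x))) / q"
  proof -
    have "l * x + h * K n x = - (h * b) + (n * - (h * a * m) + (h * x\<^sup>2 + l * x))" for h n x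
      unfolding K_def by (simp add: algebra_simps)
    then have "add_char q (l * x) * add_char q (h * K n x)
        = add_char q (- (h * b)) * (add_char q (n * - (h * a * m)) * add_char q (h * x\<^sup>2 + l * x))"
      for h n x
      by (simp only: add_char_add[symmetric])
    then show ?thesis
      by (simp only:)
  qed
  also have "\<dots> = (\<Sum>h\<in>X. \<Sum>n\<in>{1..M}. \<Sum>x\<in>X. add_char q (- (h * b))
      * (add_char q (n * - (h * a * m)) * add_char q (h * x\<^sup>2 + l * x))) / q"
    by (simp only: sum_swap_innermost[where A = "{1..M}"])
  also have "\<dots> = (\<Sum>h\<in>X. add_char q (- (h * b)) * quad_gauss_sum q h l
      * lin_exp_sum q (- (h * a * m)) M) / q"
    by (simp add: quad_gauss_sum_def lin_exp_sum_def X_def sum_product sum_distrib_left mult_ac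
        sum.swap[of _ "{1..M}"])
  finally show ?thesis
    by (simp add: X_def M_def)
qed

lemma norm_U_sum_le:
  assumes q: "prime q" and coprime: "coprime (a * m * l) q"
  shows "norm (U_sum q a b l m N) \<le> 2 * sqrt (2 * real_of_int q) * (1 + ln (real_of_int q))"
proof -
  define c where "c = - (a * m)"
  define T where
    "T h = add_char q (- (h * b)) * quad_gauss_sum q h l * lin_exp_sum q (c * h) \<lfloor>N\<rfloor>" for h
  have q_pos: "q > 0"
    using q prime_gt_0_int by blast
  have "coprime c q" "coprime l q"
    using coprime by (simp_all add: c_def)
  have not_dvd: "\<not> q dvd k" if "coprime k q" for k
  proof
    assume "q dvd k"
    with that have "is_unit q"
      by (meson coprime_common_divisor dvd_refl)
    with q show False
      by (simp add: not_prime_unit)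
  qed
  have "quad_gauss_sum q 0 l = 0"
    using sum_add_char_residues[OF q_pos, of l] not_dvd[OF \<open>coprime l q\<close>]
    by (simp add: quad_gauss_sum_def mult.commute)
  then have "T 0 = 0"
    by (simp add: T_def)
  moreover have
    "add_char q (- (h * b)) * quad_gauss_sum q h l * lin_exp_sum q (- (h * a * m)) \<lfloor>N\<rfloor> = T h" for h
    by (simp add: T_def c_def mult.commute mult.left_commute)
  moreover have "{0..<q} = insert 0 {1..<q}"
    using q_pos by auto
  ultimately have U_eq: "U_sum q a b l m N = (\<Sum>h\<in>{1..<q}. T h) / q"
    by (simp add: U_sum_eq_gauss_lin_sums[OF q_pos])
  have T_le: "norm (T h) \<le> sqrt (2 * q) * (2 / norm (1 - add_char q (c * h mod q)))"
    if h: "h \<in> {1..<q}" for h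
  proof -
    have "coprime h q"
      using h q prime_imp_coprime[of q h] by (simp add: coprime_commute zdvd_not_zless)
    then have "\<not> q dvd c * h"
      using \<open>coprime c q\<close> not_dvd by simp
    then have "norm (lin_exp_sum q (c * h) \<lfloor>N\<rfloor>) \<le> 2 / norm (1 - add_char q (c * h mod q))"
      using q_pos norm_lin_exp_sum_le[of q "c * h"] by (simp add: add_char_mod)
    moreover have "norm (quad_gauss_sum q h l) \<le> sqrt (2 * q)"
      using q_pos \<open>coprime h q\<close> by (rule norm_quad_gauss_sum_le)
    ultimately have "norm (quad_gauss_sum q h l) * norm (lin_exp_sum q (c * h) \<lfloor>N\<rfloor>)
        \<le> sqrt (2 * q) * (2 / norm (1 - add_char q (c * h mod q)))"
      using q_pos by (intro mult_mono) simp_all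
    then show ?thesis
      by (simp add: T_def norm_mult)
  qed
  have "norm (\<Sum>h\<in>{1..<q}. T h)
      \<le> (\<Sum>h\<in>{1..<q}. sqrt (2 * q) * (2 / norm (1 - add_char q (c * h mod q))))"
    using T_le by (intro order_trans[OF norm_sum] sum_mono) simp
  also have "\<dots> = 2 * sqrt (2 * q) * (\<Sum>h\<in>{1..<q}. 1 / norm (1 - add_char q (c * h mod q)))"
    by (simp add: sum_distrib_left mult_ac)
  also have "\<dots> = 2 * sqrt (2 * q) * (\<Sum>r\<in>{1..<q}. 1 / norm (1 - add_char q r))"
    using sum.reindex_bij_betw[OF bij_betw_int_remainders_mult[OF \<open>coprime c q\<close>],
        of "\<lambda>r. 1 / norm (1 - add_char q r)"]
    by simp
  also have "\<dots> \<le> 2 * sqrt (2 * q) * (q * (1 + ln q))"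
    using sum_inverse_norm_one_minus_add_char_le[OF q_pos] q_pos by (intro mult_left_mono) simp_all
  finally have sum_le: "norm (\<Sum>h\<in>{1..<q}. T h) \<le> 2 * sqrt (2 * q) * (q * (1 + ln q))" .
  have "norm (U_sum q a b l m N) = norm (\<Sum>h\<in>{1..<q}. T h) / q"
    using q_pos by (simp add: U_eq norm_divide)
  also have "\<dots> \<le> 2 * sqrt (2 * q) * (q * (1 + ln q)) / q"
    using sum_le q_pos by (intro divide_right_mono) simp_all
  also have "\<dots> = 2 * sqrt (2 * q) * (1 + ln q)"
    using q_pos by simp
  finally show ?thesis
    by simp
qed

lemma sqrt_mult_one_plus_ln_le:
  fixes q :: real
  assumes "q \<ge> 2"
  shows "2 * sqrt (2 * q) * (1 + ln q) \<le> 8 * sqrt q * ln q"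
proof -
  have "ln 2 \<le> ln q"
    using assms by simp
  then have ln_ge: "2/3 \<le> ln q"
    using ln2_ge_two_thirds by linarith
  have "sqrt 2 \<le> 3/2"
    by (rule real_le_lsqrt) (simp_all add: power2_eq_square)
  then have "sqrt 2 * sqrt q \<le> 3/2 * sqrt q"
    using assms by (intro mult_right_mono) simp_all
  then have "sqrt (2 * q) \<le> 3/2 * sqrt q"
    by (simp add: real_sqrt_mult)
  moreover have "1 + ln q \<le> 5/2 * ln q"
    using ln_ge by linarith
  ultimately have "2 * sqrt (2 * q) * (1 + ln q) \<le> (2 * (3/2 * sqrt q)) * (5/2 * ln q)"
    using ln_ge assms by (intro mult_mono) simp_all
  also have "\<dots> \<le> 8 * sqrt q * ln q"
    using ln_ge assms by (simp add: mult_ac)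
  finally show ?thesis .
qed

theorem theorem2p1:
  shows "\<exists>c>0. \<forall>(q::int) a b m l (N::real).
           prime q \<longrightarrow> gcd (a*m*l) q = 1 \<longrightarrow> N \<ge> 1 \<longrightarrow>
           cmod (U_sum q a b l m N) \<le> c * sqrt (real_of_int q) * ln (real_of_int q)"
proof (intro exI[of _ 8] conjI allI impI)
  fix q a b m l :: int and N :: real
  assume q: "prime q" and "gcd (a*m*l) q = 1"
  then have "coprime (a * m * l) q"
    by (simp add: coprime_iff_gcd_eq_1)
  then have "cmod (U_sum q a b l m N) \<le> 2 * sqrt (2 * real_of_int q) * (1 + ln (real_of_int q))"
    by (rule norm_U_sum_le[OF q])
  also have "\<dots> \<le> 8 * sqrt (real_of_int q) * ln (real_of_int q)"
    using prime_ge_2_int[OF q] by (intro sqrt_mult_one_plus_ln_le) simp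
  finally show "cmod (U_sum q a b l m N) \<le> 8 * sqrt (real_of_int q) * ln (real_of_int q)" .
qed simp

end
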